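(* For any trie $\mathcal{T}$, each edge of the suffix tree $\mathsf{STree}(\mathcal{T})$ contains at most one implicit node $v$ such that $\mathsf{str}(v)$ is a palindrome.
   Context: A trie $\mathcal{T}$ is a rooted tree in which each edge is labeled by a single character and the out-going edges of each node have mutually distinct labels. Path labels are read leaf-to-root: for $\mathbf{u}$ a descendant of $\mathbf{v}$, $\mathsf{str}(\mathbf{u},\mathbf{v})$ is the string of edge labels on the path from $\mathbf{u}$ up to $\mathbf{v}$. By convention the root $\mathbf{r}$ of $\mathcal{T}$ has a single child, reached by an edge labeled by a special character $\$$ occurring nowhere else in $\mathcal{T}$. For each node $\mathbf{v}$ let $\mathsf{suf}(\mathbf{v})=\mathsf{str}(\mathbf{v},\mathbf{r})$. The suffix tree $\mathsf{STree}(\mathcal{T})$ is the compacted trie (edges labeled by non-empty strings, out-going edge labels of each node beginning with distinct characters, every internal node other than the root having at least two children) whose leaves are in one-to-one correspondence with the non-root nodes $\mathbf{v}$ of $\mathcal{T}$, the leaf for $\mathbf{v}$ spelling $\mathsf{suf}(\mathbf{v})$ from the root. For a point (locus) $v$ on $\mathsf{STree}(\mathcal{T})$, $\mathsf{str}(v)$ is the string spelled from the root to $v$; loci at nodes are explicit nodes and loci strictly inside edges are implicit nodes. A palindrome is a string equal to its reversal. *)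

theory Defs
  imports Main "HOL-Library.Sublist"
begin

text \<open>A trie with node set V, root r, parent function par, and lab v the label
of the edge from v (a non-root node) to its parent.  dollar is the special
character on the single edge leaving the root.\<close>

definition trie :: "'v set \<Rightarrow> 'v \<Rightarrow> ('v \<Rightarrow> 'v) \<Rightarrow> ('v \<Rightarrow> 'a) \<Rightarrow> 'a \<Rightarrow> bool" where
  "trie V r par lab dollar \<longleftrightarrow>
     finite V \<and> r \<in> V \<and>
     (\<forall>v\<in>V - {r}. par v \<in> V \<and> (\<exists>k. (par ^^ k) v = r)) \<and>
     (\<forall>v\<in>V - {r}. \<forall>w\<in>V - {r}. par v = par w \<and> lab v = lab w \<longrightarrow> v = w) \<and>
     (\<exists>c\<in>V - {r}. par c = r \<and> lab c = dollar \<and> (\<forall>v\<in>V - {r}. par v = r \<longrightarrow> v = c)) \<and>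
     (\<forall>v\<in>V - {r}. lab v = dollar \<longrightarrow> par v = r)"

definition depth :: "'v \<Rightarrow> ('v \<Rightarrow> 'v) \<Rightarrow> 'v \<Rightarrow> nat" where
  "depth r par v = (LEAST k. (par ^^ k) v = r)"

text \<open>suf v = str(v, r): edge labels read from v up to the root.\<close>
definition suf :: "'v \<Rightarrow> ('v \<Rightarrow> 'v) \<Rightarrow> ('v \<Rightarrow> 'a) \<Rightarrow> 'v \<Rightarrow> 'a list" where
  "suf r par lab v = map (\<lambda>i. lab ((par ^^ i) v)) [0..<depth r par v]"

text \<open>The suffix tree STree(T), the compacted trie of {suf v | v non-root}.
Its loci (explicit or implicit nodes) are identified with the strings str(v)
they spell, i.e. the prefixes of the strings suf v.\<close>

definition stree_loci :: "'v set \<Rightarrow> 'v \<Rightarrow> ('v \<Rightarrow> 'v) \<Rightarrow> ('v \<Rightarrow> 'a) \<Rightarrow> 'a list set" where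
  "stree_loci V r par lab = {x. \<exists>v\<in>V - {r}. prefix x (suf r par lab v)}"

definition stree_explicit :: "'v set \<Rightarrow> 'v \<Rightarrow> ('v \<Rightarrow> 'v) \<Rightarrow> ('v \<Rightarrow> 'a) \<Rightarrow> 'a list set" where
  "stree_explicit V r par lab =
     {x \<in> stree_loci V r par lab.
        x = [] \<or> (\<exists>v\<in>V - {r}. x = suf r par lab v) \<or>
        (\<exists>c d. c \<noteq> d \<and> x @ [c] \<in> stree_loci V r par lab \<and> x @ [d] \<in> stree_loci V r par lab)}"

definition stree_implicit :: "'v set \<Rightarrow> 'v \<Rightarrow> ('v \<Rightarrow> 'v) \<Rightarrow> ('v \<Rightarrow> 'a) \<Rightarrow> 'a list set" where
  "stree_implicit V r par lab = stree_loci V r par lab - stree_explicit V r par lab"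

definition stree_edge :: "'v set \<Rightarrow> 'v \<Rightarrow> ('v \<Rightarrow> 'v) \<Rightarrow> ('v \<Rightarrow> 'a) \<Rightarrow> 'a list \<Rightarrow> 'a list \<Rightarrow> bool" where
  "stree_edge V r par lab u w \<longleftrightarrow>
     u \<in> stree_explicit V r par lab \<and> w \<in> stree_explicit V r par lab \<and> strict_prefix u w \<and>
     (\<forall>y\<in>stree_explicit V r par lab. \<not> (strict_prefix u y \<and> strict_prefix y w))"

definition on_edge :: "'a list \<Rightarrow> 'a list \<Rightarrow> 'a list \<Rightarrow> bool" where
  "on_edge u w x \<longleftrightarrow> strict_prefix u x \<and> strict_prefix x w"

definition palindrome :: "'a list \<Rightarrow> bool" where
  "palindrome x \<longleftrightarrow> rev x = x"

end

theory Submission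
  imports Defs
begin

text \<open>Let x be a proper prefix of y, both palindromes and implicit on the edge (u, w).
Since x is implicit, every suffix of the trie beginning with x continues along the
edge to w and hence begins with y.  Writing y = x q, the palindrome property gives
y = rev q x, so dropping the first |q| characters of a suffix beginning with y yields
a shorter suffix of the trie that begins with x, hence again with y.  This infinite
descent contradicts the existence of a suffix beginning with y.\<close>

lemma funpow_apply_funpow: "(f ^^ i) ((f ^^ k) v) = (f ^^ (i + k)) v"
  by (simp add: funpow_add)

lemma depth_funpow_eq_root:
  assumes "\<exists>k. (par ^^ k) v = r"
  shows "(par ^^ depth r par v) v = r"
  using assms unfolding depth_def by (rule LeastI_ex)

lemma funpow_neq_root_below_depth:
  assumes "j < depth r par v"
  shows "(par ^^ j) v \<noteq> r"
  using assms unfolding depth_def by (rule not_less_Least)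

lemma depth_funpow:
  assumes "\<exists>k. (par ^^ k) v = r" and "k \<le> depth r par v"
  shows "depth r par ((par ^^ k) v) = depth r par v - k"
  unfolding depth_def[of r par "(par ^^ k) v"]
proof (rule Least_equality)
  show "(par ^^ (depth r par v - k)) ((par ^^ k) v) = r"
    using depth_funpow_eq_root[OF assms(1)] assms(2) by (simp add: funpow_apply_funpow)
  show "depth r par v - k \<le> j" if "(par ^^ j) ((par ^^ k) v) = r" for j
    using funpow_neq_root_below_depth[of "j + k" r par v] that
    by (fastforce simp: funpow_apply_funpow)
qed

lemma length_suf: "length (suf r par lab v) = depth r par v"
  by (simp add: suf_def)

lemma suf_funpow:
  assumes "\<exists>k. (par ^^ k) v = r" and "k \<le> depth r par v"
  shows "suf r par lab ((par ^^ k) v) = drop k (suf r par lab v)"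
  unfolding suf_def depth_funpow[OF assms]
  by (rule nth_equalityI) (auto simp: funpow_apply_funpow add.commute)

lemma trie_reaches_root:
  "trie V r par lab dollar \<Longrightarrow> v \<in> V - {r} \<Longrightarrow> \<exists>k. (par ^^ k) v = r"
  unfolding trie_def by blast

lemma trie_funpow_nonroot:
  assumes tr: "trie V r par lab dollar" and v: "v \<in> V - {r}" and "k < depth r par v"
  shows "(par ^^ k) v \<in> V - {r}"
  using assms(3)
proof (induction k)
  case 0
  then show ?case using v by simp
next
  case (Suc k)
  then have "(par ^^ k) v \<in> V - {r}" by simp
  then have "par ((par ^^ k) v) \<in> V" using tr unfolding trie_def by blast
  moreover have "(par ^^ Suc k) v \<noteq> r" using funpow_neq_root_below_depth Suc.prems .
  ultimately show ?case by simp
qed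

lemma trie_suf_drop:
  assumes tr: "trie V r par lab dollar" and v: "v \<in> V - {r}"
    and k: "k < length (suf r par lab v)"
  shows "drop k (suf r par lab v) \<in> suf r par lab ` (V - {r})"
proof
  show "drop k (suf r par lab v) = suf r par lab ((par ^^ k) v)"
    using suf_funpow[OF trie_reaches_root[OF tr v], of k lab] k by (simp add: length_suf)
  show "(par ^^ k) v \<in> V - {r}"
    using trie_funpow_nonroot[OF tr v] k by (simp add: length_suf)
qed

lemma longest_common_prefix_append_Cons:
  "b \<noteq> c \<Longrightarrow> longest_common_prefix (as @ b # bs) (as @ c # cs) = as"
  by (induction as) auto

lemma stree_loci_prefix_closed:
  "z \<in> stree_loci V r par lab \<Longrightarrow> prefix z' z \<Longrightarrow> z' \<in> stree_loci V r par lab"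
  unfolding stree_loci_def by (auto intro: prefix_order.trans)

lemma stree_parallel_loci_branch:
  assumes z: "z \<in> stree_loci V r par lab" and w: "w \<in> stree_loci V r par lab"
    and "z \<parallel> w"
  shows "longest_common_prefix z w \<in> stree_explicit V r par lab"
    and "strict_prefix (longest_common_prefix z w) w"
proof -
  obtain as b bs c cs where bc: "b \<noteq> c" and zs: "z = as @ b # bs" and ws: "w = as @ c # cs"
    using parallel_decomp[OF \<open>z \<parallel> w\<close>] by blast
  have lcp: "longest_common_prefix z w = as"
    using longest_common_prefix_append_Cons[OF bc] zs ws by simp
  have "as @ [b] \<in> stree_loci V r par lab" "as @ [c] \<in> stree_loci V r par lab"
      "as \<in> stree_loci V r par lab"
    using stree_loci_prefix_closed[OF z] stree_loci_prefix_closed[OF w] zs ws by auto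
  with bc show "longest_common_prefix z w \<in> stree_explicit V r par lab"
    unfolding lcp stree_explicit_def by blast
  show "strict_prefix (longest_common_prefix z w) w"
    using lcp ws by (simp add: strict_prefix_def)
qed

lemma stree_edge_locus_comparable:
  assumes edge: "stree_edge V r par lab u w"
    and ux: "strict_prefix u x" and xw: "prefix x w"
    and z: "z \<in> stree_loci V r par lab" and xz: "prefix x z"
  shows "prefix z w \<or> prefix w z"
proof (rule ccontr)
  assume "\<not> (prefix z w \<or> prefix w z)"
  then have "z \<parallel> w" by blast
  have w: "w \<in> stree_loci V r par lab"
    using edge unfolding stree_edge_def stree_explicit_def by blast
  let ?m = "longest_common_prefix z w"
  have "strict_prefix u ?m"
    using ux longest_common_prefix_max_prefix[OF xz xw] by (rule prefix_order.less_le_trans)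
  with stree_parallel_loci_branch[OF z w \<open>z \<parallel> w\<close>] edge show False
    unfolding stree_edge_def by blast
qed

lemma stree_implicit_on_edge_suf:
  assumes edge: "stree_edge V r par lab u w"
    and x: "x \<in> stree_implicit V r par lab" and "on_edge u w x"
    and v: "v \<in> V - {r}" and xv: "prefix x (suf r par lab v)"
  shows "prefix w (suf r par lab v)"
proof -
  have ux: "strict_prefix u x" and xw: "prefix x w"
    using \<open>on_edge u w x\<close> unfolding on_edge_def by auto
  have sL: "suf r par lab v \<in> stree_loci V r par lab"
    using v unfolding stree_loci_def by blast
  then have sE: "suf r par lab v \<in> stree_explicit V r par lab"
    using v unfolding stree_explicit_def by blast
  then have "x \<noteq> suf r par lab v"
    using x unfolding stree_implicit_def by blast
  with xv have "strict_prefix u (suf r par lab v)"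
    using ux by (auto intro: prefix_order.less_trans)
  with sE edge have "\<not> strict_prefix (suf r par lab v) w"
    unfolding stree_edge_def by blast
  with stree_edge_locus_comparable[OF edge ux xw sL xv] show ?thesis
    by auto
qed

lemma palindrome_append_eq:
  "palindrome x \<Longrightarrow> palindrome (x @ q) \<Longrightarrow> x @ q = rev q @ x"
  unfolding palindrome_def by (metis rev_append)

lemma suffix_closed_no_prefix:
  assumes closed: "\<And>s k. s \<in> S \<Longrightarrow> k < length s \<Longrightarrow> drop k s \<in> S"
    and extend: "\<And>s. s \<in> S \<Longrightarrow> prefix x s \<Longrightarrow> prefix (p @ x) s"
    and "p \<noteq> []" and "x \<noteq> []"
  shows "s \<in> S \<Longrightarrow> \<not> prefix (p @ x) s"
proof (induction "length s" arbitrary: s rule: less_induct)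
  case less
  show ?case
  proof
    assume pxs: "prefix (p @ x) s"
    then obtain t where s: "s = p @ x @ t" by (auto simp: prefix_def)
    have "length p < length s" using s \<open>x \<noteq> []\<close> by simp
    then have "drop (length p) s \<in> S" using closed less.prems by blast
    moreover from this have "prefix (p @ x) (drop (length p) s)"
      using extend s by simp
    moreover have "length (drop (length p) s) < length s" using s \<open>p \<noteq> []\<close> by simp
    ultimately show False using less.hyps by blast
  qed
qed

lemma stree_implicit_palindrome_prefix_eq:
  assumes tr: "trie V r par lab dollar"
    and edge: "stree_edge V r par lab u w"
    and x: "x \<in> stree_implicit V r par lab" and xe: "on_edge u w x" and "palindrome x"
    and y: "y \<in> stree_loci V r par lab" and yw: "prefix y w" and "palindrome y"
    and xy: "prefix x y"
  shows "x = y"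
proof (rule ccontr)
  assume "x \<noteq> y"
  with xy obtain q where yq: "y = x @ q" and "q \<noteq> []" by (auto simp: prefix_def)
  then have yqx: "y = rev q @ x"
    using palindrome_append_eq \<open>palindrome x\<close> \<open>palindrome y\<close> by metis
  have "x \<noteq> []" using xe unfolding on_edge_def by auto
  let ?S = "suf r par lab ` (V - {r})"
  have "\<not> prefix (rev q @ x) s" if "s \<in> ?S" for s
  proof (rule suffix_closed_no_prefix[OF _ _ _ \<open>x \<noteq> []\<close> that])
    show "drop k s \<in> ?S" if "s \<in> ?S" "k < length s" for s k
      using trie_suf_drop[OF tr] that by blast
    show "prefix (rev q @ x) s" if "s \<in> ?S" "prefix x s" for s
      using stree_implicit_on_edge_suf[OF edge x xe] yw that
      unfolding yqx[symmetric] by (blast intro: prefix_order.trans)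
    show "rev q \<noteq> []" using \<open>q \<noteq> []\<close> by simp
  qed
  with y show False
    unfolding stree_loci_def yqx by blast
qed

theorem lemma2:
  fixes V :: "'v set" and r :: 'v and par :: "'v \<Rightarrow> 'v" and lab :: "'v \<Rightarrow> 'a" and dollar :: 'a
  assumes "trie V r par lab dollar"
    and "stree_edge V r par lab u w"
    and "x \<in> stree_implicit V r par lab" and "on_edge u w x" and "palindrome x"
    and "y \<in> stree_implicit V r par lab" and "on_edge u w y" and "palindrome y"
  shows "x = y"
proof -
  have xw: "prefix x w" and yw: "prefix y w"
    using assms(4,7) unfolding on_edge_def by auto
  have xL: "x \<in> stree_loci V r par lab" and yL: "y \<in> stree_loci V r par lab"
    using assms(3,6) unfolding stree_implicit_def by auto
  from xw yw have "prefix x y \<or> prefix y x" by (rule prefix_same_cases)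
  then show ?thesis
  proof
    assume "prefix x y"
    with stree_implicit_palindrome_prefix_eq[OF assms(1-5) yL yw assms(8)] show ?thesis .
  next
    assume "prefix y x"
    with stree_implicit_palindrome_prefix_eq[OF assms(1,2,6-8) xL xw assms(5)] show ?thesis
      by simp
  qed
qed

end
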